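(* Let $T$ be a countably infinite graph. Then every countably infinite, infinitely connected graph $H$ contains a spanning subgraph isomorphic to $T$ if and only if $T$ is a forest and either (i) some component of $T$ has unbounded radius, or (ii) $T$ has infinitely many components.
   Context: A graph $H$ is infinitely connected if it is infinite and $H-F$ is connected for every finite $F\subseteq V(H)$. A connected graph has radius at most $k$ if there is a vertex $u$ such that every vertex is joined to $u$ by a path of length at most $k$; it has unbounded radius if no such $k$ exists. A spanning subgraph of $H$ is a subgraph with vertex set $V(H)$. *)

theory Defs
  imports Main "HOL-Library.Countable_Set"
begin

definition graph :: "'a set \<Rightarrow> ('a \<Rightarrow> 'a \<Rightarrow> bool) \<Rightarrow> bool" where
  "graph V E \<longleftrightarrow> (\<forall>x y. E x y \<longrightarrow> x \<in> V \<and> y \<in> V \<and> x \<noteq> y \<and> E y x)"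

definition is_path :: "'a set \<Rightarrow> ('a \<Rightarrow> 'a \<Rightarrow> bool) \<Rightarrow> 'a list \<Rightarrow> bool" where
  "is_path V E xs \<longleftrightarrow> xs \<noteq> [] \<and> distinct xs \<and> set xs \<subseteq> V \<and>
     (\<forall>i. Suc i < length xs \<longrightarrow> E (xs ! i) (xs ! Suc i))"

definition joined :: "'a set \<Rightarrow> ('a \<Rightarrow> 'a \<Rightarrow> bool) \<Rightarrow> 'a \<Rightarrow> 'a \<Rightarrow> bool" where
  "joined V E u v \<longleftrightarrow> (\<exists>xs. is_path V E xs \<and> hd xs = u \<and> last xs = v)"

definition connected_graph :: "'a set \<Rightarrow> ('a \<Rightarrow> 'a \<Rightarrow> bool) \<Rightarrow> bool" where
  "connected_graph V E \<longleftrightarrow> V \<noteq> {} \<and> (\<forall>u\<in>V. \<forall>v\<in>V. joined V E u v)"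

definition induced :: "('a \<Rightarrow> 'a \<Rightarrow> bool) \<Rightarrow> 'a set \<Rightarrow> 'a \<Rightarrow> 'a \<Rightarrow> bool" where
  "induced E W = (\<lambda>x y. E x y \<and> x \<in> W \<and> y \<in> W)"

definition infinitely_connected :: "'a set \<Rightarrow> ('a \<Rightarrow> 'a \<Rightarrow> bool) \<Rightarrow> bool" where
  "infinitely_connected V E \<longleftrightarrow> infinite V \<and>
     (\<forall>F. finite F \<and> F \<subseteq> V \<longrightarrow> connected_graph (V - F) (induced E (V - F)))"

definition is_cycle :: "'a set \<Rightarrow> ('a \<Rightarrow> 'a \<Rightarrow> bool) \<Rightarrow> 'a list \<Rightarrow> bool" where
  "is_cycle V E xs \<longleftrightarrow> length xs \<ge> 3 \<and> is_path V E xs \<and> E (last xs) (hd xs)"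

definition forest :: "'a set \<Rightarrow> ('a \<Rightarrow> 'a \<Rightarrow> bool) \<Rightarrow> bool" where
  "forest V E \<longleftrightarrow> \<not> (\<exists>xs. is_cycle V E xs)"

definition component :: "'a set \<Rightarrow> ('a \<Rightarrow> 'a \<Rightarrow> bool) \<Rightarrow> 'a \<Rightarrow> 'a set" where
  "component V E v = {w \<in> V. joined V E v w}"

definition components :: "'a set \<Rightarrow> ('a \<Rightarrow> 'a \<Rightarrow> bool) \<Rightarrow> 'a set set" where
  "components V E = component V E ` V"

definition radius_le :: "'a set \<Rightarrow> ('a \<Rightarrow> 'a \<Rightarrow> bool) \<Rightarrow> nat \<Rightarrow> bool" where
  "radius_le V E k \<longleftrightarrow> (\<exists>u\<in>V. \<forall>w\<in>V. \<exists>xs. is_path V E xs \<and> hd xs = u \<and> last xs = w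
        \<and> length xs - 1 \<le> k)"

definition unbounded_radius :: "'a set \<Rightarrow> ('a \<Rightarrow> 'a \<Rightarrow> bool) \<Rightarrow> bool" where
  "unbounded_radius V E \<longleftrightarrow> (\<forall>k. \<not> radius_le V E k)"

definition has_spanning_copy ::
  "'b set \<Rightarrow> ('b \<Rightarrow> 'b \<Rightarrow> bool) \<Rightarrow> 'a set \<Rightarrow> ('a \<Rightarrow> 'a \<Rightarrow> bool) \<Rightarrow> bool" where
  "has_spanning_copy VH EH VT ET \<longleftrightarrow>
     (\<exists>f. bij_betw f VT VH \<and> (\<forall>x\<in>VT. \<forall>y\<in>VT. ET x y \<longrightarrow> EH (f x) (f y)))"

end

theory Submission
  imports Defs
begin

text \<open>Necessity. Split \<open>\<nat>\<close> into consecutive blocks of \<open>s\<close> vertices, each spanning a path,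
  and attach the two ends of block \<open>n\<close> to the pair of earlier vertices coded by \<open>n\<close>. Every
  pair of vertices is linked through infinitely many blocks, so these graphs are infinitely
  connected. A cycle must contain a whole block and one more vertex, so a spanning copy of \<open>T\<close>
  rules out cycles of length at most \<open>s\<close>. A vertex in the middle of a late block is far from
  all earlier vertices, so it cannot lie within bounded distance of the centres of finitely many
  components.

  Sufficiency is a back-and-forth construction by finite partial embeddings whose domain meets
  every component of \<open>T\<close> in a subtree. A new vertex of \<open>T\<close> is reached by a path leaving the
  domain, which is copied onto a path of \<open>H\<close> avoiding the finite image. A new vertex \<open>h\<close> of
  \<open>H\<close> is the image either of a vertex in a component of \<open>T\<close> not yet touched, or of the end of
  a long path leaving the domain inside a component of unbounded radius, copied onto a path of
  \<open>H\<close> ending at \<open>h\<close>.\<close>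

section \<open>Paths, components and infinite connectivity\<close>

lemma is_path_conv:
  "is_path V E xs \<longleftrightarrow> xs \<noteq> [] \<and> distinct xs \<and> set xs \<subseteq> V \<and> successively E xs"
  unfolding is_path_def successively_conv_nth by blast

lemma is_path_singleton [simp]: "is_path V E [x] \<longleftrightarrow> x \<in> V"
  by (simp add: is_path_conv)

lemma is_path_append:
  assumes "is_path V E xs" "is_path V E ys" "E (last xs) (hd ys)" "set xs \<inter> set ys = {}"
  shows "is_path V E (xs @ ys)"
  using assms by (auto simp: is_path_conv successively_append_iff)

lemma is_path_append_last:
  assumes "is_path V E xs" "is_path V E (last xs # ys)" "set xs \<inter> set ys = {}"
  shows "is_path V E (xs @ ys)"
  using assms by (cases ys) (auto simp: is_path_conv successively_append_iff)

lemma is_path_appendD: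
  assumes "is_path V E (xs @ ys)"
  shows "xs \<noteq> [] \<Longrightarrow> is_path V E xs" and "ys \<noteq> [] \<Longrightarrow> is_path V E ys"
  using assms by (auto simp: is_path_conv successively_append_iff)

lemma is_path_take: "is_path V E xs \<Longrightarrow> 0 < m \<Longrightarrow> is_path V E (take m xs)"
  using is_path_appendD(1)[of V E "take m xs" "drop m xs"] by (auto simp: is_path_conv)

lemma is_path_length_ge_2: "is_path V E xs \<Longrightarrow> hd xs \<noteq> last xs \<Longrightarrow> 2 \<le> length xs"
  by (cases xs rule: remdups_adj.cases) (auto simp: is_path_conv)

lemma is_path_rev: "(\<And>x y. E x y \<Longrightarrow> E y x) \<Longrightarrow> is_path V E xs \<Longrightarrow> is_path V E (rev xs)"
  unfolding is_path_conv by (auto intro: successively_mono)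

lemma is_path_induced_iff:
  "is_path W (induced E W) xs \<longleftrightarrow> is_path UNIV E xs \<and> set xs \<subseteq> W"
  unfolding is_path_conv induced_def by (auto intro: successively_mono)

lemma joined_along_path:
  "is_path V E xs \<Longrightarrow> x \<in> set xs \<Longrightarrow> joined V E (hd xs) x"
proof -
  assume "is_path V E xs" "x \<in> set xs"
  moreover obtain ys zs where "xs = ys @ x # zs" using \<open>x \<in> set xs\<close> by (meson split_list)
  ultimately have "is_path V E (ys @ [x])" "hd (ys @ [x]) = hd xs"
    using is_path_appendD(1)[of V E "ys @ [x]" zs] by (auto simp: hd_append)
  then show ?thesis unfolding joined_def by (metis last_snoc)
qed

lemma is_path_subset_component: "is_path V E xs \<Longrightarrow> set xs \<subseteq> component V E (hd xs)"
proof
  fix x assume "is_path V E xs" "x \<in> set xs"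
  then have "joined V E (hd xs) x" by (rule joined_along_path)
  moreover have "x \<in> V" using \<open>is_path V E xs\<close> \<open>x \<in> set xs\<close> by (auto simp: is_path_conv)
  ultimately show "x \<in> component V E (hd xs)" unfolding component_def by blast
qed

lemma joined_iff_rtranclp: "joined V E u w \<longleftrightarrow> u \<in> V \<and> (induced E V)\<^sup>*\<^sup>* u w"
proof
  assume "joined V E u w"
  then obtain xs where xs: "is_path V E xs" "hd xs = u" "last xs = w"
    unfolding joined_def by blast
  have "set xs \<subseteq> V \<Longrightarrow> successively E xs \<Longrightarrow> xs \<noteq> [] \<Longrightarrow> (induced E V)\<^sup>*\<^sup>* (hd xs) (last xs)"
    by (induction xs rule: induct_list012)
       (auto simp: induced_def intro: converse_rtranclp_into_rtranclp)
  with xs show "u \<in> V \<and> (induced E V)\<^sup>*\<^sup>* u w"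
    by (auto simp: is_path_conv)
next
  assume "u \<in> V \<and> (induced E V)\<^sup>*\<^sup>* u w"
  then have "(induced E V)\<^sup>*\<^sup>* u w" "u \<in> V" by auto
  then show "joined V E u w"
  proof (induction rule: rtranclp_induct)
    case base
    then show ?case unfolding joined_def by (intro exI[of _ "[u]"]) simp
  next
    case (step v w)
    then obtain xs where xs: "is_path V E xs" "hd xs = u" "last xs = v"
      unfolding joined_def by blast
    show ?case
    proof (cases "w \<in> set xs")
      case True
      then show ?thesis using joined_along_path[OF xs(1)] xs(2) by simp
    next
      case False
      with xs step(2) have "is_path V E (xs @ [w])"
        by (intro is_path_append) (auto simp: induced_def)
      with xs show ?thesis unfolding joined_def
        by (metis is_path_conv hd_append last_snoc)
    qed
  qed
qed

lemma joined_refl: "u \<in> V \<Longrightarrow> joined V E u u"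
  by (simp add: joined_iff_rtranclp)

lemma joined_in: "joined V E u v \<Longrightarrow> u \<in> V \<and> v \<in> V"
  unfolding joined_def is_path_conv by (metis hd_in_set last_in_set subsetD)

lemma joined_step: "joined V E u v \<Longrightarrow> E v w \<Longrightarrow> w \<in> V \<Longrightarrow> joined V E u w"
  using joined_in[of V E u v]
  by (auto simp: joined_iff_rtranclp induced_def intro: rtranclp.rtrancl_into_rtrancl)

lemma joined_trans: "joined V E u v \<Longrightarrow> joined V E v w \<Longrightarrow> joined V E u w"
  unfolding joined_iff_rtranclp by auto

lemma graph_sym: "graph V E \<Longrightarrow> E x y \<Longrightarrow> E y x"
  unfolding graph_def by blast

lemma joined_sym: "graph W E \<Longrightarrow> joined V E u v \<Longrightarrow> joined V E v u"
  unfolding joined_def by (metis is_path_rev graph_sym hd_rev last_rev)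

lemma joined_induced_mono:
  "joined D (induced E D) x y \<Longrightarrow> D \<subseteq> D' \<Longrightarrow> joined D' (induced E D') x y"
  unfolding joined_def is_path_induced_iff by blast

lemma infinite_ex_notin: "infinite A \<Longrightarrow> finite B \<Longrightarrow> \<exists>x\<in>A. x \<notin> B"
  by (meson finite_subset subsetI)

lemma split_at_last_member:
  "set xs \<inter> D \<noteq> {} \<Longrightarrow> \<exists>ys z zs. xs = ys @ z # zs \<and> z \<in> D \<and> set zs \<inter> D = {}"
proof (induction xs)
  case (Cons x xs)
  show ?case
  proof (cases "set xs \<inter> D = {}")
    case True
    with Cons.prems show ?thesis by (intro exI[of _ "[]"]) auto
  next
    case False
    then obtain ys z zs where "xs = ys @ z # zs" "z \<in> D" "set zs \<inter> D = {}"
      using Cons.IH by blast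
    then show ?thesis by (intro exI[of _ "x # ys"]) auto
  qed
qed simp

lemma graph_induced: "graph V E \<Longrightarrow> graph D (induced E D)"
  unfolding graph_def induced_def by blast

lemma component_eq:
  assumes "graph V E" and dc: "joined V E d c"
  shows "component V E c = component V E d"
proof -
  have cd: "joined V E c d" using joined_sym[OF assms] .
  show ?thesis unfolding component_def
    using joined_trans[OF dc] joined_trans[OF cd] by blast
qed

lemma unjoined_vertex_if_infinite_components:
  assumes G: "graph V E" and "finite D" "infinite (components V E)"
  shows "\<exists>c\<in>V. \<forall>d\<in>D. \<not> joined V E d c"
proof (rule ccontr)
  assume all_joined: "\<not> ?thesis"
  have "components V E \<subseteq> component V E ` D"
  proof
    fix C assume "C \<in> components V E"
    then obtain c where c: "c \<in> V" "C = component V E c" unfolding components_def by blast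
    with all_joined obtain d where "d \<in> D" "joined V E d c" by blast
    with c show "C \<in> component V E ` D" using component_eq[OF G] by blast
  qed
  with assms(2,3) show False by (meson finite_imageI finite_subset)
qed

lemma radius_le_mono: "radius_le V E a \<Longrightarrow> a \<le> b \<Longrightarrow> radius_le V E b"
  unfolding radius_le_def by (meson order_trans)

lemma is_path_map:
  assumes "is_path V E xs" "inj_on f V" "f ` V \<subseteq> W"
    and "\<And>x y. x \<in> V \<Longrightarrow> y \<in> V \<Longrightarrow> E x y \<Longrightarrow> E' (f x) (f y)"
  shows "is_path W E' (map f xs)"
proof -
  have "successively (\<lambda>x y. E' (f x) (f y)) xs"
    using assms(1,4) unfolding is_path_conv
    by (induction xs rule: induct_list012) auto
  with assms(1-3) show ?thesis
    unfolding is_path_conv by (auto simp: successively_map distinct_map inj_on_subset)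
qed

lemma infinitely_connected_path:
  assumes "infinitely_connected V E" "finite F" "a \<in> V - F" "b \<in> V - F"
  shows "\<exists>ps. is_path V E ps \<and> hd ps = a \<and> last ps = b \<and> set ps \<inter> F = {}"
proof -
  have "connected_graph (V - F \<inter> V) (induced E (V - F \<inter> V))"
    using assms(1,2) unfolding infinitely_connected_def by simp
  moreover have "V - F \<inter> V = V - F" by blast
  ultimately have "joined (V - F) (induced E (V - F)) a b"
    using assms(3,4) unfolding connected_graph_def by simp
  then show ?thesis
    unfolding joined_def is_path_induced_iff by (auto simp: is_path_conv)
qed

lemma infinitely_connected_long_path:
  assumes conn: "infinitely_connected V E" and F: "finite F" and a: "a \<in> V - F"
  shows "\<exists>ps. is_path V E ps \<and> hd ps = a \<and> length ps = Suc n \<and> set ps \<inter> F = {}"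
proof (induction n)
  case 0
  show ?case using a by (intro exI[of _ "[a]"]) auto
next
  case (Suc n)
  then obtain ps where ps: "is_path V E ps" "hd ps = a" "length ps = Suc n" "set ps \<inter> F = {}"
    by blast
  obtain ps' z where ps_eq: "ps = ps' @ [z]"
    using ps(1) by (cases ps rule: rev_cases) (auto simp: is_path_conv)
  let ?F = "F \<union> set ps'"
  have z: "z \<notin> ?F" "z \<in> V" using ps(1,4) unfolding ps_eq by (auto simp: is_path_conv)
  have "infinite V" using conn unfolding infinitely_connected_def by simp
  then obtain b where b: "b \<in> V" "b \<notin> insert z ?F"
    using infinite_ex_notin[of V "insert z ?F"] F by blast
  \<comment> \<open>the second vertex of a path from \<open>z\<close> to a fresh \<open>b\<close> avoiding \<open>?F\<close> extends \<open>ps\<close>\<close>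
  obtain qs where qs: "is_path V E qs" "hd qs = z" "last qs = b" "set qs \<inter> ?F = {}"
    using infinitely_connected_path[OF conn, of ?F z b] F b z by auto
  obtain w qs' where "qs = z # w # qs'"
    using qs(1,2,3) b(2) by (cases qs; cases "tl qs") (auto simp: is_path_conv)
  then have w: "E z w" "w \<in> V" "w \<noteq> z" "w \<notin> ?F"
    using qs by (auto simp: is_path_conv)
  then have "is_path V E (ps @ [w])"
    using ps(1) ps_eq by (intro is_path_append) (auto simp: is_path_conv)
  with ps w(4) show ?case
    by (intro exI[of _ "ps @ [w]"]) (auto simp: is_path_conv)
qed

section \<open>Graphs on \<open>\<nat>\<close> built from linked blocks\<close>

definition link_start :: "nat \<Rightarrow> nat" where
  "link_start n = fst (prod_decode (fst (prod_decode n)))"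

definition link_end :: "nat \<Rightarrow> nat" where
  "link_end n = snd (prod_decode (fst (prod_decode n)))"

definition active_block :: "nat \<Rightarrow> nat \<Rightarrow> bool" where
  "active_block s n \<longleftrightarrow> link_start n < n * s \<and> link_end n < n * s"

lemma active_block_pos: "active_block s n \<Longrightarrow> 0 < s"
  unfolding active_block_def by (cases s) auto

text \<open>Vertex \<open>n * s + p\<close> (\<open>p < s\<close>) is position \<open>p\<close> of block \<open>n\<close>.\<close>

definition block_arc :: "nat \<Rightarrow> nat \<Rightarrow> nat \<Rightarrow> bool" where
  "block_arc s x y \<longleftrightarrow>
     (\<exists>n p. Suc p < s \<and> x = n * s + p \<and> y = n * s + Suc p)
   \<or> (\<exists>n. active_block s n \<and> x = link_start n \<and> y = n * s)
   \<or> (\<exists>n. active_block s n \<and> x = link_end n \<and> y = n * s + (s - 1))"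

definition block_graph :: "nat \<Rightarrow> nat \<Rightarrow> nat \<Rightarrow> bool" where
  "block_graph s x y \<longleftrightarrow> block_arc s x y \<or> block_arc s y x"

lemma graph_block_graph: "graph UNIV (block_graph s)"
  unfolding graph_def block_graph_def block_arc_def active_block_def by auto

lemma block_position_unique:
  fixes n m p q s :: nat
  assumes "p < s" "q < s" "n * s + p = m * s + q"
  shows "n = m \<and> p = q"
proof -
  from assms(3) have "(n * s + p) div s = (m * s + q) div s" "(n * s + p) mod s = (m * s + q) mod s"
    by simp_all
  with assms(1,2) show ?thesis by simp
qed

lemma block_le_if_below: "(m::nat) * s \<le> z \<Longrightarrow> z < Suc n * s \<Longrightarrow> m \<le> n"
  by (metis le_less_trans less_Suc_eq_le mult_less_cancel2)

lemma block_graph_lower_neighbour: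
  assumes "p < s" and e: "block_graph s (n * s + p) z" and "z < Suc n * s"
  shows "(0 < p \<and> z = n * s + p - 1) \<or> (Suc p < s \<and> z = n * s + p + 1)
       \<or> (p = 0 \<and> active_block s n \<and> z = link_start n)
       \<or> (p = s - 1 \<and> active_block s n \<and> z = link_end n)"
proof -
  have block_eq: "m = n \<and> q = p" if "q < s" "n * s + p = m * s + q" for m q
    using block_position_unique[of p s q n m] assms(1) that by auto
  have not_outgoing: False if "active_block s m" "m * s \<le> z" "n * s + p < m * s" for m
  proof -
    have "m \<le> n" using block_le_if_below[of m s z n] that(2) assms(3) by simp
    then have "m * s \<le> n * s" by (rule mult_le_mono1)
    with that(3) show False by linarith
  qed
  from e consider
      (succ) m q where "Suc q < s" "n * s + p = m * s + q" "z = m * s + Suc q"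
    | (prev) m q where "Suc q < s" "z = m * s + q" "n * s + p = m * s + Suc q"
    | (start_out) m where "active_block s m" "n * s + p = link_start m" "z = m * s"
    | (end_out) m where "active_block s m" "n * s + p = link_end m" "z = m * s + (s - 1)"
    | (start_in) m where "active_block s m" "z = link_start m" "n * s + p = m * s"
    | (end_in) m where "active_block s m" "z = link_end m" "n * s + p = m * s + (s - 1)"
    unfolding block_graph_def block_arc_def by blast
  then show ?thesis
  proof cases
    case (succ m q)
    then show ?thesis using block_eq[of q m] by simp
  next
    case (prev m q)
    then show ?thesis using block_eq[of "Suc q" m] by auto
  next
    case (start_out m)
    then show ?thesis using not_outgoing[of m] unfolding active_block_def by simp
  next
    case (end_out m)
    then show ?thesis using not_outgoing[of m] unfolding active_block_def by simp
  next
    case (start_in m)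
    then show ?thesis using block_eq[of 0 m] assms(1) by simp
  next
    case (end_in m)
    then show ?thesis using block_eq[of "s - 1" m] assms(1) by simp
  qed
qed

lemma cycle_two_neighbours:
  assumes c: "is_cycle V E xs" and G: "graph W E" and y: "y \<in> set xs"
  obtains a b where "a \<noteq> b" "a \<in> set xs" "b \<in> set xs" "E y a" "E y b"
proof -
  let ?n = "length xs"
  obtain i where i: "i < ?n" "xs ! i = y" using y by (auto simp: in_set_conv_nth)
  have n: "3 \<le> ?n" and dist: "distinct xs"
    and step: "\<And>i. Suc i < ?n \<Longrightarrow> E (xs ! i) (xs ! Suc i)"
    and close: "E (xs ! (?n - 1)) (xs ! 0)"
    using c unfolding is_cycle_def is_path_def by (auto simp: last_conv_nth hd_conv_nth)
  define j where "j = (if Suc i = ?n then 0 else Suc i)"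
  define k where "k = (if i = 0 then ?n - 1 else i - 1)"
  have "E (xs ! i) (xs ! j)"
  proof (cases "Suc i = ?n")
    case True
    then have "i = ?n - 1" by simp
    with True close show ?thesis unfolding j_def by simp
  qed (use step[of i] i(1) j_def in auto)
  moreover have "E (xs ! i) (xs ! k)"
    using step[of "i - 1"] close i(1) graph_sym[OF G] unfolding k_def by auto
  moreover have "j < ?n" "k < ?n" "j \<noteq> k"
    using n i(1) unfolding j_def k_def by auto
  moreover have "xs ! j \<noteq> xs ! k" using calculation(3-5) dist by (simp add: nth_eq_iff_index_eq)
  ultimately show ?thesis using i(2) by (intro that[of "xs ! j" "xs ! k"]) auto
qed

text \<open>Below block \<open>n + 1\<close>, a vertex of block \<open>n\<close> has only one possible neighbour besides its
  successor in the block, respectively besides its predecessor, so membership in \<open>S\<close> propagates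
  along the block; at the start of the block the second neighbour must be \<open>link_start n\<close>.\<close>

lemma block_graph_degree_two_block:
  assumes two: "\<And>y. y \<in> S \<Longrightarrow> \<exists>a b. a \<noteq> b \<and> a \<in> S \<and> b \<in> S \<and> block_graph s y a \<and> block_graph s y b"
    and below: "\<And>y. y \<in> S \<Longrightarrow> y < Suc n * s" and s: "2 < s" and p: "p < s" "n * s + p \<in> S"
  shows "(+) (n * s) ` {..<s} \<subseteq> S" and "active_block s n" and "link_start n \<in> S"
proof -
  have nbr: "(0 < p \<and> z = n * s + p - 1) \<or> (Suc p < s \<and> z = n * s + p + 1)
       \<or> (p = 0 \<and> active_block s n \<and> z = link_start n)
       \<or> (p = s - 1 \<and> active_block s n \<and> z = link_end n)"
    if "p < s" "block_graph s (n * s + p) z" "z \<in> S" for p z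
    using block_graph_lower_neighbour[OF that(1,2) below[OF that(3)]] .
  have not_unique: False
    if "n * s + p \<in> S" "\<And>z. z \<in> S \<Longrightarrow> block_graph s (n * s + p) z \<Longrightarrow> z = c" for p c
    using two[OF that(1)] that(2) by metis
  have up: "n * s + Suc p \<in> S" if "Suc p < s" "n * s + p \<in> S" for p
    using not_unique[OF that(2), of "if p = 0 then link_start n else n * s + p - 1"] nbr[of p] that
    by fastforce
  have down: "n * s + (p - 1) \<in> S" if "0 < p" "p < s" "n * s + p \<in> S" for p
    using not_unique[OF that(3), of "if p = s - 1 then link_end n else n * s + p + 1"] nbr[of p] that
    by fastforce
  have "p < s \<Longrightarrow> n * s + p \<in> S \<Longrightarrow> n * s \<in> S" for p
  proof (induction p)
    case (Suc p)
    then show ?case using down[of "Suc p"] by simp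
  qed simp
  with p have start: "n * s \<in> S" by blast
  have "q < s \<Longrightarrow> n * s + q \<in> S" for q
  proof (induction q)
    case (Suc q)
    then show ?case using up[of q] by simp
  qed (simp add: start)
  then show "(+) (n * s) ` {..<s} \<subseteq> S" by auto
  have "active_block s n \<and> link_start n \<in> S"
    using not_unique[of 0 "n * s + 1"] nbr[of 0] start s by fastforce
  then show "active_block s n" "link_start n \<in> S" by simp_all
qed

lemma block_graph_degree_two_card:
  assumes "finite S" "S \<noteq> {}"
    and two: "\<And>y. y \<in> S \<Longrightarrow> \<exists>a b. a \<noteq> b \<and> a \<in> S \<and> b \<in> S \<and> block_graph s y a \<and> block_graph s y b"
  shows "s < card S"
proof (cases "2 < s")
  case False
  obtain y where "y \<in> S" using assms(2) by blast
  with two obtain a b where "a \<noteq> b" "a \<in> S" "b \<in> S" "block_graph s y a" "block_graph s y b"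
    by blast
  moreover have "y \<noteq> a" "y \<noteq> b"
    using calculation(4,5) graph_block_graph[of s] unfolding graph_def by blast+
  ultimately have "card {y, a, b} \<le> card S" using \<open>y \<in> S\<close> assms(1) by (intro card_mono) auto
  with \<open>a \<noteq> b\<close> \<open>y \<noteq> a\<close> \<open>y \<noteq> b\<close> False show ?thesis by simp
next
  case True
  define n where "n = Max S div s"
  have p: "Max S mod s < s" "n * s + Max S mod s \<in> S"
    using assms(1,2) True unfolding n_def by simp_all
  have eq: "Max S = n * s + Max S mod s" unfolding n_def by simp
  have below: "y < Suc n * s" if "y \<in> S" for y
    using Max_ge[OF assms(1) that] eq p(1) by simp
  note block = block_graph_degree_two_block[OF two below True p]
  let ?B = "insert (link_start n) ((+) (n * s) ` {..<s})"
  have "link_start n \<notin> (+) (n * s) ` {..<s}" using block(2) unfolding active_block_def by auto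
  then have "card ?B = Suc s" by (simp add: card_image)
  moreover have "card ?B \<le> card S" using block(1,3) assms(1) by (intro card_mono) auto
  ultimately show ?thesis by simp
qed

lemma block_graph_cycle_length:
  assumes c: "is_cycle UNIV (block_graph s) xs"
  shows "s < length xs"
proof -
  have "xs \<noteq> []" "distinct xs" using c unfolding is_cycle_def is_path_def by auto
  moreover have "\<exists>a b. a \<noteq> b \<and> a \<in> set xs \<and> b \<in> set xs \<and> block_graph s y a \<and> block_graph s y b"
    if "y \<in> set xs" for y
    using cycle_two_neighbours[OF c graph_block_graph that] by blast
  ultimately show ?thesis using block_graph_degree_two_card[of "set xs" s] distinct_card by fastforce
qed

lemma block_path:
  assumes "0 < s" "active_block s n" "link_start n \<noteq> link_end n"
  shows "is_path UNIV (block_graph s) (link_start n # [n * s..<n * s + s] @ [link_end n])"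
proof -
  have inside: "successively (block_graph s) [n * s..<n * s + s]"
    unfolding successively_conv_nth block_graph_def block_arc_def by auto
  have "block_graph s (link_start n) (n * s)" "block_graph s (n * s + s - 1) (link_end n)"
    using assms(1,2) unfolding block_graph_def block_arc_def
    by (auto intro!: exI[of _ n] simp: add_diff_assoc)
  with inside assms show ?thesis
    unfolding is_path_conv active_block_def
    by (auto simp: successively_append_iff successively_Cons)
qed

text \<open>Block \<open>n = \<langle>\<langle>u, v\<rangle>, j\<rangle>\<close> is a path from \<open>u\<close> to \<open>v\<close> through
  vertices \<open>\<ge> n * s \<ge> j\<close>; so every finite set is avoided by such a path for large \<open>j\<close>.\<close>

lemma infinitely_connected_block_graph:
  assumes "0 < s"
  shows "infinitely_connected UNIV (block_graph s)"
  unfolding infinitely_connected_def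
proof (intro conjI allI impI)
  fix F :: "nat set" assume F: "finite F \<and> F \<subseteq> UNIV"
  show "connected_graph (UNIV - F) (induced (block_graph s) (UNIV - F))"
    unfolding connected_graph_def
  proof (intro conjI ballI)
    show "UNIV - F \<noteq> {}" using F by (metis finite.emptyI finite_Diff2 infinite_UNIV_nat)
    fix u v assume uv: "u \<in> UNIV - F" "v \<in> UNIV - F"
    show "joined (UNIV - F) (induced (block_graph s) (UNIV - F)) u v"
    proof (cases "u = v")
      case True
      then show ?thesis using uv joined_refl by metis
    next
      case False
      obtain j where j: "insert u (insert v F) \<subseteq> {..<j}"
        using F finite_nat_bounded[of "insert u (insert v F)"] by auto
      define n where "n = prod_encode (prod_encode (u, v), j)"
      have link: "link_start n = u" "link_end n = v"
        unfolding n_def link_start_def link_end_def by simp_all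
      have "j \<le> n" unfolding n_def by (rule le_prod_encode_2)
      also have "n \<le> n * s" using assms by simp
      finally have "j \<le> n * s" .
      with j have above: "x < n * s" if "x \<in> insert u (insert v F)" for x
        using that by fastforce
      let ?ps = "u # [n * s..<n * s + s] @ [v]"
      have "is_path UNIV (block_graph s) ?ps"
        using block_path[OF assms, of n] above link False unfolding active_block_def by simp
      moreover have "set ?ps \<subseteq> UNIV - F" using uv above by fastforce
      ultimately show ?thesis
        unfolding joined_def is_path_induced_iff by (intro exI[of _ ?ps]) simp
    qed
  qed
qed simp

text \<open>A truncated lower bound for the distance to \<open>{..<N}\<close>: inside an active block, position
  \<open>p\<close> is \<open>p + 1\<close> steps from the link vertex at its start and \<open>s - p\<close> steps from the one
  at its end.\<close>

function block_potential :: "nat \<Rightarrow> nat \<Rightarrow> nat \<Rightarrow> nat \<Rightarrow> nat" where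
  "block_potential s N K y =
    (if y < N \<or> s = 0 then 0
     else if active_block s (y div s) then
       min K (min (block_potential s N K (link_start (y div s)) + y mod s + 1)
                  (block_potential s N K (link_end (y div s)) + (s - y mod s)))
     else K)"
  by auto
termination
proof (relation "measure (\<lambda>(s, N, K, y). y)")
  fix s N K y :: nat
  assume "\<not> (y < N \<or> s = 0)" "active_block s (y div s)"
  then have "link_start (y div s) < y" "link_end (y div s) < y"
    unfolding active_block_def using div_times_less_eq_dividend[of y s] by linarith+
  then show "((s, N, K, link_start (y div s)), s, N, K, y) \<in> measure (\<lambda>(s, N, K, y). y)"
    and "((s, N, K, link_end (y div s)), s, N, K, y) \<in> measure (\<lambda>(s, N, K, y). y)"
    by simp_all
qed simp

declare block_potential.simps [simp del]

lemma block_potential_le: "block_potential s N K y \<le> K"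
  by (subst block_potential.simps) auto

lemma block_potential_below: "y < N \<Longrightarrow> block_potential s N K y = 0"
  by (subst block_potential.simps) auto

lemma block_potential_block:
  assumes "p < s" "N \<le> n * s"
  shows "block_potential s N K (n * s + p) =
    (if active_block s n then
       min K (min (block_potential s N K (link_start n) + p + 1)
                  (block_potential s N K (link_end n) + (s - p)))
     else K)"
  using assms by (subst block_potential.simps) auto

context
  fixes s N K n\<^sub>0 :: nat
  assumes K: "K \<le> s" and N: "N = n\<^sub>0 * s"
begin

lemma block_below_if_start_below:
  assumes "p < s" "n * s < N"
  shows "n * s + p < N"
proof -
  have "Suc n \<le> n\<^sub>0" using assms(2) unfolding N by simp
  then have "Suc n * s \<le> N" unfolding N by (rule mult_le_mono1)
  with assms(1) show ?thesis by simp
qed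

lemma min_min_shift:
  fixes k a b :: nat
  shows "min k (min (Suc a) b) \<le> min k (min a (Suc b)) + 1
    \<and> min k (min a (Suc b)) \<le> min k (min (Suc a) b) + 1"
  by (simp add: min_def)

lemma block_potential_succ:
  assumes p: "Suc p < s"
  shows "block_potential s N K (n * s + Suc p) \<le> block_potential s N K (n * s + p) + 1
       \<and> block_potential s N K (n * s + p) \<le> block_potential s N K (n * s + Suc p) + 1"
proof (cases "N \<le> n * s")
  case True
  let ?a = "block_potential s N K (link_start n) + p + 1"
  let ?b = "block_potential s N K (link_end n) + (s - Suc p)"
  have "block_potential s N K (n * s + p) = (if active_block s n then min K (min ?a (Suc ?b)) else K)"
    using True p block_potential_block[of p s N n K] by (simp add: Suc_diff_Suc)
  moreover have "block_potential s N K (n * s + Suc p)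
      = (if active_block s n then min K (min (Suc ?a) ?b) else K)"
    using True p block_potential_block[of "Suc p" s N n K] by simp
  ultimately show ?thesis using min_min_shift[of K ?a ?b] by simp
next
  case False
  then show ?thesis using p block_below_if_start_below[of p n] block_below_if_start_below[of "Suc p" n]
    by (simp add: block_potential_below)
qed

lemma block_potential_arc:
  assumes "block_arc s x y"
  shows "block_potential s N K y \<le> block_potential s N K x + 1
       \<and> block_potential s N K x \<le> block_potential s N K y + 1"
  using assms unfolding block_arc_def
proof (elim disjE exE conjE)
  fix n p assume "Suc p < s" "x = n * s + p" "y = n * s + Suc p"
  then show ?thesis using block_potential_succ by simp
next
  fix n assume a: "active_block s n" and xy: "x = link_start n" "y = n * s"
  show ?thesis
  proof (cases "N \<le> n * s")
    case True
    moreover have "0 < s" using a by (rule active_block_pos)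
    ultimately have "block_potential s N K y
        = min K (min (block_potential s N K x + 1) (block_potential s N K (link_end n) + s))"
      using block_potential_block[of 0 s N n K] a unfolding xy by simp
    then show ?thesis using block_potential_le[of s N K x] K by (auto simp: min_def)
  next
    case False
    then show ?thesis using a unfolding xy active_block_def by (simp add: block_potential_below)
  qed
next
  fix n assume a: "active_block s n" and xy: "x = link_end n" "y = n * s + (s - 1)"
  have s: "0 < s" using a by (rule active_block_pos)
  show ?thesis
  proof (cases "N \<le> n * s")
    case True
    then have "block_potential s N K y
        = min K (min (block_potential s N K (link_start n) + s) (block_potential s N K x + 1))"
      using block_potential_block[of "s - 1" s N n K] a s unfolding xy by simp
    then show ?thesis using block_potential_le[of s N K x] K by (auto simp: min_def)
  next
    case False
    then have "y < N" "x < n * s"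
      using block_below_if_start_below[of "s - 1" n] a s unfolding xy active_block_def by auto
    then show ?thesis using False by (simp add: block_potential_below)
  qed
qed

lemma block_potential_path:
  "successively (block_graph s) xs \<Longrightarrow> xs \<noteq> [] \<Longrightarrow>
    block_potential s N K (last xs) \<le> block_potential s N K (hd xs) + (length xs - 1)"
proof (induction xs rule: induct_list012)
  case (3 x y zs)
  then have "block_potential s N K y \<le> block_potential s N K x + 1"
    using block_potential_arc[of x y] block_potential_arc[of y x] unfolding block_graph_def by auto
  with 3 show ?case by simp
qed simp_all

end

lemma block_graph_far_from_below:
  assumes s: "2 * k + 1 \<le> s" and xs: "successively (block_graph s) xs" "xs \<noteq> []"
    and ends: "hd xs < n\<^sub>0 * s" "last xs = n\<^sub>0 * s + k"
  shows "k < length xs - 1"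
proof -
  let ?pot = "block_potential s (n\<^sub>0 * s) (Suc k)"
  have "Suc k \<le> ?pot (link_start n\<^sub>0) + k + 1" "Suc k \<le> ?pot (link_end n\<^sub>0) + (s - k)"
    using s by linarith+
  then have "min (Suc k) (min (?pot (link_start n\<^sub>0) + k + 1) (?pot (link_end n\<^sub>0) + (s - k)))
      = Suc k"
    by (intro min.absorb1 min.boundedI)
  then have "?pot (n\<^sub>0 * s + k) = Suc k"
    using s block_potential_block[of k s "n\<^sub>0 * s" n\<^sub>0 "Suc k"] by simp
  moreover have "?pot (last xs) \<le> ?pot (hd xs) + (length xs - 1)"
    using block_potential_path[of "Suc k" s "n\<^sub>0 * s" n\<^sub>0 xs] s xs by simp
  ultimately show ?thesis using ends block_potential_below[of "hd xs"] by simp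
qed

lemma block_graph_copy_cycle_length:
  assumes copy: "has_spanning_copy UNIV (block_graph s) VT ET" and c: "is_cycle VT ET xs"
  shows "s < length xs"
proof -
  obtain f where f: "bij_betw f VT UNIV"
    and edges: "\<And>x y. x \<in> VT \<Longrightarrow> y \<in> VT \<Longrightarrow> ET x y \<Longrightarrow> block_graph s (f x) (f y)"
    using copy unfolding has_spanning_copy_def by blast
  have "is_path UNIV (block_graph s) (map f xs)"
    using is_path_map[of VT ET xs f UNIV "block_graph s"] c f edges
    by (auto simp: is_cycle_def bij_betw_def)
  moreover have "block_graph s (last (map f xs)) (hd (map f xs))"
  proof -
    have "xs \<noteq> []" "last xs \<in> VT" "hd xs \<in> VT" "ET (last xs) (hd xs)"
      using c by (auto simp: is_cycle_def is_path_conv)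
    then show ?thesis using edges[of "last xs" "hd xs"] by (simp add: last_map hd_map)
  qed
  ultimately have "is_cycle UNIV (block_graph s) (map f xs)"
    using c unfolding is_cycle_def by simp
  then show ?thesis using block_graph_cycle_length by fastforce
qed

text \<open>If all components have radius at most \<open>k\<close>, their finitely many centres lie below some
  block \<open>n\<^sub>0\<close>, but the preimage of vertex \<open>k\<close> of block \<open>n\<^sub>0\<close> is within \<open>k\<close> of its centre.\<close>

lemma block_graph_copy_radius:
  assumes copy: "has_spanning_copy UNIV (block_graph (2 * k + 1)) VT ET"
    and fin: "finite (components VT ET)"
  shows "\<exists>C\<in>components VT ET. \<not> radius_le C (induced ET C) k"
proof (rule ccontr)
  define s where "s = 2 * k + 1"
  assume "\<not> ?thesis"
  then obtain centre where centre: "\<And>C w. C \<in> components VT ET \<Longrightarrow> w \<in> C \<Longrightarrow>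
      centre C \<in> C \<and> (\<exists>xs. is_path C (induced ET C) xs \<and> hd xs = centre C \<and> last xs = w
        \<and> length xs - 1 \<le> k)"
    unfolding radius_le_def by metis
  obtain f where f: "bij_betw f VT UNIV"
    and edges: "\<And>x y. x \<in> VT \<Longrightarrow> y \<in> VT \<Longrightarrow> ET x y \<Longrightarrow> block_graph s (f x) (f y)"
    using copy unfolding has_spanning_copy_def s_def by blast
  obtain n\<^sub>0 where below: "\<And>C. C \<in> components VT ET \<Longrightarrow> f (centre C) < n\<^sub>0"
    using finite_nat_bounded[OF finite_imageI[OF fin, of "\<lambda>C. f (centre C)"]] by auto
  obtain t where t: "t \<in> VT" "f t = n\<^sub>0 * s + k"
    using f by (metis UNIV_I bij_betw_iff_bijections)
  define C where "C = component VT ET t"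
  have C: "C \<in> components VT ET" "t \<in> C"
    unfolding C_def components_def component_def using t(1) joined_refl by auto
  then obtain xs where xs: "is_path C (induced ET C) xs" "hd xs = centre C" "last xs = t"
    "length xs - 1 \<le> k"
    using centre by blast
  have "C \<subseteq> VT" unfolding C_def component_def by blast
  then have "successively (block_graph s) (map f xs)"
    using xs(1) unfolding is_path_conv successively_map
    by (auto simp: induced_def intro: edges elim!: successively_mono)
  moreover have "map f xs \<noteq> []" "last (map f xs) = n\<^sub>0 * s + k"
    using xs t(2) by (auto simp: last_map is_path_conv)
  moreover have "hd (map f xs) < n\<^sub>0 * s"
  proof -
    have "n\<^sub>0 \<le> n\<^sub>0 * s" unfolding s_def by simp
    with below[OF C(1)] have "f (centre C) < n\<^sub>0 * s" by (rule less_le_trans)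
    with xs show ?thesis by (auto simp: hd_map is_path_conv)
  qed
  ultimately have "k < length (map f xs) - 1"
    by (intro block_graph_far_from_below) (auto simp: s_def intro: less_le_trans)
  then show False using xs(4) by simp
qed

lemma forest_if_block_graph_copies:
  assumes "\<And>s. 0 < s \<Longrightarrow> has_spanning_copy UNIV (block_graph s) VT ET"
  shows "forest VT ET"
  unfolding forest_def
proof
  assume "\<exists>xs. is_cycle VT ET xs"
  then obtain xs where cycle: "is_cycle VT ET xs" ..
  then have "0 < length xs" unfolding is_cycle_def by linarith
  from block_graph_copy_cycle_length[OF assms[OF this] cycle] show False by simp
qed

lemma unbounded_or_infinite_if_block_graph_copies:
  assumes copy: "\<And>s. 0 < s \<Longrightarrow> has_spanning_copy UNIV (block_graph s) VT ET"
  shows "(\<exists>C\<in>components VT ET. unbounded_radius C (induced ET C)) \<or> infinite (components VT ET)"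
proof (rule ccontr)
  assume "\<not> ?thesis"
  then have fin: "finite (components VT ET)"
    and "\<forall>C\<in>components VT ET. \<exists>k. radius_le C (induced ET C) k"
    unfolding unbounded_radius_def by auto
  then obtain r where "\<And>C. C \<in> components VT ET \<Longrightarrow> radius_le C (induced ET C) (r C)" by metis
  then have "radius_le C (induced ET C) (\<Sum>C\<in>components VT ET. r C)" if "C \<in> components VT ET" for C
    using radius_le_mono member_le_sum[OF that, of r] fin that by blast
  with block_graph_copy_radius[OF copy fin] show False by auto
qed

section \<open>Extending partial embeddings of a forest\<close>

definition joins_inside :: "'a set \<Rightarrow> ('a \<Rightarrow> 'a \<Rightarrow> bool) \<Rightarrow> 'a set \<Rightarrow> bool" where
  "joins_inside V E D \<longleftrightarrow> (\<forall>x\<in>D. \<forall>y\<in>D. joined V E x y \<longrightarrow> joined D (induced E D) x y)"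

lemma joins_inside_empty [simp]: "joins_inside V E {}"
  unfolding joins_inside_def by simp

lemma joins_inside_insert_isolated:
  assumes G: "graph V E" and D: "joins_inside V E D" and v: "\<forall>d\<in>D. \<not> joined V E d v"
  shows "joins_inside V E (insert v D)"
  unfolding joins_inside_def
proof (intro ballI impI)
  fix x y assume xy: "x \<in> insert v D" "y \<in> insert v D" and j: "joined V E x y"
  show "joined (insert v D) (induced E (insert v D)) x y"
  proof (cases "x = v \<or> y = v")
    case True
    with xy j v have "x = y" using joined_sym[OF G] by blast
    with xy show ?thesis by (simp add: joined_refl)
  next
    case False
    with xy j D show ?thesis
      unfolding joins_inside_def by (auto intro: joined_induced_mono)
  qed
qed

lemma joins_inside_insert_leaf:
  assumes G: "graph V E" and D: "joins_inside V E D" and d: "d \<in> D" "E d v"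
  shows "joins_inside V E (insert v D)"
  unfolding joins_inside_def
proof (intro ballI impI)
  let ?D' = "insert v D"
  have to_v: "joined ?D' (induced E ?D') x v" if x: "x \<in> D" "joined V E x v" for x
  proof -
    have "E v d" "d \<in> V" using d G unfolding graph_def by blast+
    with x(2) have "joined V E x d" by (rule joined_step)
    with x(1) d(1) D have "joined ?D' (induced E ?D') x d"
      unfolding joins_inside_def by (blast intro: joined_induced_mono)
    then show ?thesis by (rule joined_step) (use d in \<open>auto simp: induced_def\<close>)
  qed
  fix x y assume xy: "x \<in> ?D'" "y \<in> ?D'" and j: "joined V E x y"
  consider "x = v" "y = v" | "x = v" "y \<in> D" | "x \<in> D" "y = v" | "x \<in> D" "y \<in> D"
    using xy by blast
  then show "joined ?D' (induced E ?D') x y"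
  proof cases
    case 1
    then show ?thesis by (simp add: joined_refl)
  next
    case 2
    then show ?thesis
      using to_v[of y] joined_sym[OF G j] joined_sym[OF graph_induced[OF G]] by blast
  next
    case 3
    then show ?thesis using to_v j by blast
  next
    case 4
    then show ?thesis using D j unfolding joins_inside_def by (blast intro: joined_induced_mono)
  qed
qed

text \<open>Two neighbours of \<open>v\<close> in \<open>D\<close> would be joined inside \<open>D\<close>, closing a cycle through \<open>v\<close>.\<close>

lemma forest_unique_neighbour:
  assumes G: "graph V E" and F: "forest V E" and D: "joins_inside V E D" "D \<subseteq> V"
    and v: "v \<notin> D" and d: "d \<in> D" "E v d" and d': "d' \<in> D" "E v d'"
  shows "d = d'"
proof (rule ccontr)
  assume ne: "d \<noteq> d'"
  have "v \<in> V" using G d(2) unfolding graph_def by blast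
  have "d \<in> V" "d' \<in> V" using d(1) d'(1) D(2) by blast+
  then have "joined V E d v" using graph_sym[OF G d(2)] \<open>v \<in> V\<close> by (intro joined_step[OF joined_refl])
  then have "joined V E d d'" using d'(2) \<open>d' \<in> V\<close> by (rule joined_step)
  then have "joined D (induced E D) d d'" using D(1) d(1) d'(1) unfolding joins_inside_def by blast
  then obtain P where P: "is_path D (induced E D) P" "hd P = d" "last P = d'"
    unfolding joined_def by blast
  then have P': "is_path V E P" "set P \<subseteq> D"
    using D(2) unfolding is_path_induced_iff by (auto simp: is_path_conv)
  have "2 \<le> length P" using is_path_length_ge_2[OF P(1)] P(2,3) ne by simp
  moreover have "is_path V E (P @ [v])"
    using P' P(3) v \<open>v \<in> V\<close> graph_sym[OF G d'(2)] by (intro is_path_append) auto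
  moreover have "E (last (P @ [v])) (hd (P @ [v]))"
    using P P' d(2) by (simp add: is_path_conv)
  ultimately have "is_cycle V E (P @ [v])" unfolding is_cycle_def by simp
  with F show False unfolding forest_def by blast
qed

text \<open>Going from \<open>u \<in> D\<close> to a vertex \<open>w\<close> far from \<open>u\<close> inside its component, the last visit of
  \<open>D\<close> is followed by a long path: otherwise a path from \<open>u\<close> to that visit inside \<open>D\<close>, which has
  fewer than \<open>card D\<close> edges, would bring \<open>w\<close> close to \<open>u\<close>.\<close>

lemma long_path_leaving:
  assumes G: "graph V E" and C: "C \<in> components V E" "unbounded_radius C (induced E C)"
    and D: "finite D" "D \<subseteq> V" "joins_inside V E D" and u: "u \<in> D" "u \<in> C"
  shows "\<exists>b zs. b \<in> D \<and> is_path V E (b # zs) \<and> set zs \<inter> D = {} \<and> n \<le> length zs"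
proof -
  obtain c where "C = component V E c" "joined V E c u"
    using C(1) u(2) unfolding components_def component_def by blast
  then have Cu: "C = component V E u" using component_eq[OF G] by blast
  have "\<not> radius_le C (induced E C) (card D + n)" using C(2) unfolding unbounded_radius_def by blast
  then obtain w where w: "w \<in> C" and far: "\<forall>xs. is_path C (induced E C) xs \<longrightarrow> hd xs = u \<longrightarrow>
      last xs = w \<longrightarrow> \<not> length xs - 1 \<le> card D + n"
    using u(2) unfolding radius_le_def by blast
  obtain xs where xs: "is_path V E xs" "hd xs = u" "last xs = w"
    using w unfolding Cu component_def joined_def by blast
  have "hd xs \<in> set xs" using xs(1) by (simp add: is_path_conv)
  with xs(2) u(1) have "set xs \<inter> D \<noteq> {}" by blast
  then obtain ys b zs where split: "xs = ys @ b # zs" "b \<in> D" "set zs \<inter> D = {}"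
    by (meson split_at_last_member)
  have bzs: "is_path V E (b # zs)" using is_path_appendD(2)[of V E ys "b # zs"] xs(1) split(1) by simp
  have "joined V E u b" using joined_along_path[OF xs(1)] xs(2) split(1) by simp
  then have "joined D (induced E D) u b" using D(3) u(1) split(2) unfolding joins_inside_def by blast
  then obtain P where P: "is_path D (induced E D) P" "hd P = u" "last P = b"
    unfolding joined_def by blast
  then have P': "is_path V E P" "set P \<subseteq> D" "length P \<le> card D"
    using D(1,2) unfolding is_path_induced_iff
    by (auto simp: is_path_conv distinct_card[symmetric] card_mono)
  have "n \<le> length zs"
  proof (rule ccontr)
    assume short: "\<not> n \<le> length zs"
    have Q: "is_path V E (P @ zs)"
      using P'(1,2) P(3) bzs split(3) by (intro is_path_append_last) auto
    have ends: "hd (P @ zs) = u" "last (P @ zs) = w"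
      using P P'(1) xs(3) split(1) by (auto simp: is_path_conv)
    have "is_path C (induced E C) (P @ zs)"
      using Q is_path_subset_component[OF Q] ends(1) unfolding Cu is_path_induced_iff
      by (auto simp: is_path_conv)
    with far ends P'(3) short show False by auto
  qed
  with split(2,3) bzs show ?thesis by blast
qed

definition extends :: "'a set \<Rightarrow> ('a \<Rightarrow> 'b) \<Rightarrow> 'a set \<Rightarrow> ('a \<Rightarrow> 'b) \<Rightarrow> bool" where
  "extends D' \<phi>' D \<phi> \<longleftrightarrow> D \<subseteq> D' \<and> (\<forall>x\<in>D. \<phi>' x = \<phi> x)"

lemma extends_refl [simp]: "extends D \<phi> D \<phi>"
  unfolding extends_def by simp

lemma extends_trans: "extends D'' \<phi>'' D' \<phi>' \<Longrightarrow> extends D' \<phi>' D \<phi> \<Longrightarrow> extends D'' \<phi>'' D \<phi>"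
  unfolding extends_def by auto

lemma extends_insert: "v \<notin> D \<Longrightarrow> extends (insert v D) (\<phi>(v := h)) D \<phi>"
  unfolding extends_def by auto

lemma extends_chain:
  assumes "\<And>n. extends (D (Suc n)) (\<phi> (Suc n)) (D n) (\<phi> n)" "m \<le> n"
  shows "extends (D n) (\<phi> n) (D m) (\<phi> m)"
  using assms(2)
proof (rule transitive_stepwise_le[where R = "\<lambda>m n. extends (D n) (\<phi> n) (D m) (\<phi> m)"])
  show "\<And>x y z. extends (D y) (\<phi> y) (D x) (\<phi> x) \<Longrightarrow> extends (D z) (\<phi> z) (D y) (\<phi> y)
      \<Longrightarrow> extends (D z) (\<phi> z) (D x) (\<phi> x)"
    by (rule extends_trans)
qed (simp_all add: assms(1))

context
  fixes P :: "'a set \<Rightarrow> ('a \<Rightarrow> 'b) \<Rightarrow> bool" and A :: "'a set" and B :: "'b set"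
  assumes forth_step: "\<And>D \<phi> a. P D \<phi> \<Longrightarrow> a \<in> A \<Longrightarrow> \<exists>D' \<phi>'. P D' \<phi>' \<and> extends D' \<phi>' D \<phi> \<and> a \<in> D'"
    and back_step: "\<And>D \<phi> b. P D \<phi> \<Longrightarrow> b \<in> B \<Longrightarrow> \<exists>D' \<phi>'. P D' \<phi>' \<and> extends D' \<phi>' D \<phi> \<and> b \<in> \<phi>' ` D'"
begin

lemma back_and_forth_step:
  assumes "P D \<phi>"
  shows "\<exists>D' \<phi>'. P D' \<phi>' \<and> extends D' \<phi>' D \<phi> \<and> (a \<in> A \<longrightarrow> a \<in> D') \<and> (b \<in> B \<longrightarrow> b \<in> \<phi>' ` D')"
proof -
  obtain D' \<phi>' where D': "P D' \<phi>'" "extends D' \<phi>' D \<phi>" "a \<in> A \<longrightarrow> a \<in> D'"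
    using forth_step[OF assms, of a] assms by (cases "a \<in> A") (auto intro: extends_refl)
  obtain D'' \<phi>'' where "P D'' \<phi>''" "extends D'' \<phi>'' D' \<phi>'" "b \<in> B \<longrightarrow> b \<in> \<phi>'' ` D''"
    using back_step[OF D'(1), of b] D'(1) by (cases "b \<in> B") (auto intro: extends_refl)
  with D' show ?thesis unfolding extends_def by (intro exI[of _ D''] exI[of _ \<phi>'']) auto
qed

lemma back_and_forth_chain:
  assumes "countable A" "countable B" "P D\<^sub>0 \<phi>\<^sub>0"
  obtains D \<phi> where "\<And>n. P (D n) (\<phi> n)" "\<And>n. extends (D (Suc n)) (\<phi> (Suc n)) (D n) (\<phi> n)"
    "\<And>a. a \<in> A \<Longrightarrow> a \<in> D (Suc (to_nat_on A a))"
    "\<And>b. b \<in> B \<Longrightarrow> b \<in> \<phi> (Suc (to_nat_on B b)) ` D (Suc (to_nat_on B b))"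
proof -
  define good where "good n p q \<longleftrightarrow> P (fst q) (snd q) \<and> extends (fst q) (snd q) (fst p) (snd p)
    \<and> (from_nat_into A n \<in> A \<longrightarrow> from_nat_into A n \<in> fst q)
    \<and> (from_nat_into B n \<in> B \<longrightarrow> from_nat_into B n \<in> snd q ` fst q)"
    for n and p q :: "'a set \<times> ('a \<Rightarrow> 'b)"
  have good_ex: "\<exists>q. good n p q" if "P (fst p) (snd p)" for n p
    using back_and_forth_step[OF that] unfolding good_def by auto
  define S where "S = rec_nat (D\<^sub>0, \<phi>\<^sub>0) (\<lambda>n p. SOME q. good n p q)"
  have S: "P (fst (S n)) (snd (S n)) \<and> good n (S n) (S (Suc n))" for n
  proof (induction n)
    case 0
    then show ?case using someI_ex[OF good_ex] assms(3) unfolding S_def by simp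
  next
    case (Suc n)
    then have "P (fst (S (Suc n))) (snd (S (Suc n)))" unfolding good_def by simp
    then show ?case using someI_ex[OF good_ex] unfolding S_def by simp
  qed
  show thesis
  proof (rule that[of "\<lambda>n. fst (S n)" "\<lambda>n. snd (S n)"])
    fix a assume "a \<in> A"
    then show "a \<in> fst (S (Suc (to_nat_on A a)))"
      using S[of "to_nat_on A a"] assms(1) unfolding good_def by simp
  next
    fix b assume "b \<in> B"
    then show "b \<in> snd (S (Suc (to_nat_on B b))) ` fst (S (Suc (to_nat_on B b)))"
      using S[of "to_nat_on B b"] assms(2) unfolding good_def by simp
  qed (use S good_def in auto)
qed

lemma back_and_forth:
  assumes "countable A" "countable B" "P D\<^sub>0 \<phi>\<^sub>0" and domain: "\<And>D \<phi>. P D \<phi> \<Longrightarrow> D \<subseteq> A"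
  obtains g where "\<And>x y. x \<in> A \<Longrightarrow> y \<in> A \<Longrightarrow> \<exists>D \<phi>. P D \<phi> \<and> x \<in> D \<and> y \<in> D \<and> g x = \<phi> x \<and> g y = \<phi> y"
    and "B \<subseteq> g ` A"
proof -
  obtain D \<phi> where P: "\<And>n. P (D n) (\<phi> n)" and step: "\<And>n. extends (D (Suc n)) (\<phi> (Suc n)) (D n) (\<phi> n)"
    and in_D: "\<And>a. a \<in> A \<Longrightarrow> a \<in> D (Suc (to_nat_on A a))"
    and in_image: "\<And>b. b \<in> B \<Longrightarrow> b \<in> \<phi> (Suc (to_nat_on B b)) ` D (Suc (to_nat_on B b))"
    using back_and_forth_chain[OF assms(1-3)] by blast
  note chain = extends_chain[of D \<phi>, OF step]
  define stage where "stage x = Suc (to_nat_on A x)" for x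
  define g where "g x = \<phi> (stage x) x" for x
  have later: "x \<in> D n \<and> g x = \<phi> n x" if "x \<in> A" "stage x \<le> n" for x n
    using chain[OF that(2)] in_D[OF that(1)] unfolding g_def stage_def extends_def by auto
  show thesis
  proof (rule that)
    fix x y assume "x \<in> A" "y \<in> A"
    let ?n = "max (stage x) (stage y)"
    show "\<exists>D \<phi>. P D \<phi> \<and> x \<in> D \<and> y \<in> D \<and> g x = \<phi> x \<and> g y = \<phi> y"
      using P[of ?n] later[OF \<open>x \<in> A\<close>, of ?n] later[OF \<open>y \<in> A\<close>, of ?n] by auto
  next
    show "B \<subseteq> g ` A"
    proof
      fix b assume "b \<in> B"
      let ?m = "Suc (to_nat_on B b)"
      obtain x where x: "x \<in> D ?m" "b = \<phi> ?m x" using in_image[OF \<open>b \<in> B\<close>] by blast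
      then have "x \<in> A" using domain[OF P] by blast
      then have "g x = \<phi> (max ?m (stage x)) x" using later by simp
      also have "\<dots> = b" using chain[of ?m "max ?m (stage x)"] x unfolding extends_def by simp
      finally show "b \<in> g ` A" using \<open>x \<in> A\<close> by blast
    qed
  qed
qed

end

locale forest_into_infinitely_connected =
  fixes VT :: "'a set" and ET :: "'a \<Rightarrow> 'a \<Rightarrow> bool"
    and VH :: "'b set" and EH :: "'b \<Rightarrow> 'b \<Rightarrow> bool"
  assumes graph_T: "graph VT ET" and forest_T: "forest VT ET"
    and graph_H: "graph VH EH" and connected_H: "infinitely_connected VH EH"
begin

text \<open>The last condition, saying that the domain meets every component of the forest in a
  subtree, guarantees that a new vertex has at most one neighbour in the domain.\<close>

definition partial_embedding :: "'a set \<Rightarrow> ('a \<Rightarrow> 'b) \<Rightarrow> bool" where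
  "partial_embedding D \<phi> \<longleftrightarrow> finite D \<and> D \<subseteq> VT \<and> inj_on \<phi> D \<and> \<phi> ` D \<subseteq> VH
     \<and> (\<forall>x\<in>D. \<forall>y\<in>D. ET x y \<longrightarrow> EH (\<phi> x) (\<phi> y)) \<and> joins_inside VT ET D"

lemma partial_embedding_empty: "partial_embedding {} \<phi>"
  unfolding partial_embedding_def by simp

lemma partial_embedding_insert:
  assumes \<phi>: "partial_embedding D \<phi>" and v: "v \<in> VT" "v \<notin> D" and h: "h \<in> VH" "h \<notin> \<phi> ` D"
    and edges: "\<And>d. d \<in> D \<Longrightarrow> ET v d \<Longrightarrow> EH h (\<phi> d)"
    and joins: "joins_inside VT ET (insert v D)"
  shows "partial_embedding (insert v D) (\<phi>(v := h))"
proof -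
  let ?\<phi> = "\<phi>(v := h)"
  have "inj_on ?\<phi> (insert v D)"
    using \<phi> v h unfolding partial_embedding_def by (auto intro: inj_on_fun_updI)
  moreover have "EH (?\<phi> x) (?\<phi> y)" if xy: "x \<in> insert v D" "y \<in> insert v D" "ET x y" for x y
  proof -
    have "\<not> ET v v" using graph_T unfolding graph_def by blast
    then consider "x = v" "y \<in> D" | "x \<in> D" "y = v" | "x \<in> D" "y \<in> D"
      using xy by blast
    then show ?thesis
    proof cases
      case 1
      then show ?thesis using edges xy(3) v(2) by auto
    next
      case 2
      then show ?thesis
        using edges graph_sym[OF graph_T xy(3)] graph_sym[OF graph_H] v(2) by fastforce
    next
      case 3
      then show ?thesis using \<phi> xy(3) v(2) unfolding partial_embedding_def by auto
    qed
  qed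
  ultimately show ?thesis
    using \<phi> v h joins unfolding partial_embedding_def by auto
qed

lemma partial_embedding_insert_isolated:
  assumes \<phi>: "partial_embedding D \<phi>" and v: "v \<in> VT" "\<forall>d\<in>D. \<not> joined VT ET d v"
    and h: "h \<in> VH" "h \<notin> \<phi> ` D"
  shows "partial_embedding (insert v D) (\<phi>(v := h))" and "v \<notin> D"
proof -
  show "v \<notin> D" using v(2) joined_refl[OF v(1)] by blast
  moreover have "\<not> ET v d" if d: "d \<in> D" for d
  proof
    assume "ET v d"
    then have "ET d v" by (rule graph_sym[OF graph_T])
    moreover have "d \<in> VT" using \<phi> d unfolding partial_embedding_def by blast
    ultimately have "joined VT ET d v" using v(1) by (metis joined_refl joined_step)
    with v(2) d show False by blast
  qed
  moreover have "joins_inside VT ET (insert v D)"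
    using joins_inside_insert_isolated[OF graph_T _ v(2)] \<phi> unfolding partial_embedding_def by blast
  ultimately show "partial_embedding (insert v D) (\<phi>(v := h))"
    using partial_embedding_insert[OF \<phi> v(1) _ h] by blast
qed

lemma partial_embedding_insert_leaf:
  assumes \<phi>: "partial_embedding D \<phi>" and d: "d \<in> D" "ET d v" and v: "v \<notin> D"
    and h: "h \<in> VH" "h \<notin> \<phi> ` D" "EH (\<phi> d) h"
  shows "partial_embedding (insert v D) (\<phi>(v := h))"
proof (rule partial_embedding_insert[OF \<phi> _ v h(1,2)])
  have joins: "joins_inside VT ET D" and DT: "D \<subseteq> VT"
    using \<phi> unfolding partial_embedding_def by blast+
  show "v \<in> VT" using graph_T d(2) unfolding graph_def by blast
  show "EH h (\<phi> d')" if "d' \<in> D" "ET v d'" for d'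
  proof -
    have "d' = d"
      using forest_unique_neighbour[OF graph_T forest_T joins DT v that d(1) graph_sym[OF graph_T d(2)]] .
    then show ?thesis using graph_sym[OF graph_H h(3)] by simp
  qed
  show "joins_inside VT ET (insert v D)"
    using joins_inside_insert_leaf[OF graph_T joins d] .
qed

lemma partial_embedding_extend_path:
  assumes "partial_embedding D \<phi>" "d \<in> D" "is_path VT ET (d # xs)" "set xs \<inter> D = {}"
    "is_path VH EH (\<phi> d # ys)" "set ys \<inter> \<phi> ` D = {}" "length ys = length xs"
  shows "\<exists>\<phi>'. partial_embedding (D \<union> set xs) \<phi>' \<and> extends (D \<union> set xs) \<phi>' D \<phi>
    \<and> \<phi>' ` set xs = set ys"
  using assms
proof (induction xs arbitrary: D \<phi> d ys)
  case Nil
  then show ?case by (intro exI[of _ \<phi>]) simp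
next
  case (Cons x xs)
  then obtain y ys' where ys: "ys = y # ys'" by (cases ys) auto
  let ?D = "insert x D" and ?\<phi> = "\<phi>(x := y)"
  have x: "ET d x" "x \<notin> D" and y: "EH (\<phi> d) y" "y \<in> VH" "y \<notin> \<phi> ` D"
    using Cons.prems ys by (auto simp: is_path_conv)
  then have emb: "partial_embedding ?D ?\<phi>"
    using partial_embedding_insert_leaf[OF Cons.prems(1,2)] by blast
  have "is_path VT ET (x # xs)" "is_path VH EH (?\<phi> x # ys')"
    using Cons.prems(3,5) ys by (auto simp: is_path_conv)
  moreover have "set xs \<inter> ?D = {}" "set ys' \<inter> ?\<phi> ` ?D = {}"
    using Cons.prems(3-6) ys x(2) by (auto simp: is_path_conv)
  moreover have "length ys' = length xs" using Cons.prems(7) ys by simp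
  ultimately obtain \<phi>' where \<phi>': "partial_embedding (?D \<union> set xs) \<phi>'"
    "extends (?D \<union> set xs) \<phi>' ?D ?\<phi>" "\<phi>' ` set xs = set ys'"
    using Cons.IH[OF emb insertI1] by blast
  have "extends (D \<union> set (x # xs)) \<phi>' D \<phi>"
    using extends_trans[OF \<phi>'(2) extends_insert[OF x(2)]] by simp
  moreover have "\<phi>' x = y" using \<phi>'(2) unfolding extends_def by simp
  moreover have "?D \<union> set xs = D \<union> set (x # xs)" by auto
  ultimately show ?case using \<phi>' ys by (intro exI[of _ \<phi>']) simp
qed

lemma infinite_VH: "infinite VH"
  using connected_H unfolding infinitely_connected_def by simp

lemma partial_embedding_finite_image: "partial_embedding D \<phi> \<Longrightarrow> finite (\<phi> ` D)"
  unfolding partial_embedding_def by simp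

lemma partial_embedding_fresh:
  assumes "partial_embedding D \<phi>"
  obtains h where "h \<in> VH" "h \<notin> \<phi> ` D"
  using infinite_ex_notin[OF infinite_VH partial_embedding_finite_image[OF assms]] by blast

lemma path_from_image:
  assumes \<phi>: "partial_embedding D \<phi>" and b: "b \<in> D"
  shows "\<exists>ys. is_path VH EH (\<phi> b # ys) \<and> set ys \<inter> \<phi> ` D = {} \<and> length ys = n"
proof -
  let ?F = "\<phi> ` D - {\<phi> b}"
  have "finite ?F" using partial_embedding_finite_image[OF \<phi>] by simp
  moreover have "\<phi> b \<in> VH - ?F" using \<phi> b unfolding partial_embedding_def by auto
  ultimately obtain ps where ps: "is_path VH EH ps" "hd ps = \<phi> b" "length ps = Suc n" "set ps \<inter> ?F = {}"
    using infinitely_connected_long_path[OF connected_H] by blast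
  then obtain ys where "ps = \<phi> b # ys" by (cases ps) (auto simp: is_path_conv)
  with ps show ?thesis by (intro exI[of _ ys]) (auto simp: is_path_conv)
qed

lemma path_from_image_to:
  assumes \<phi>: "partial_embedding D \<phi>" and b: "b \<in> D" and h: "h \<in> VH" "h \<notin> \<phi> ` D"
  shows "\<exists>ys. is_path VH EH (\<phi> b # ys) \<and> set ys \<inter> \<phi> ` D = {} \<and> h \<in> set ys"
proof -
  let ?F = "\<phi> ` D - {\<phi> b}"
  have "finite ?F" using partial_embedding_finite_image[OF \<phi>] by simp
  moreover have "\<phi> b \<in> VH - ?F" "h \<in> VH - ?F" using \<phi> b h unfolding partial_embedding_def by auto
  ultimately obtain ps where ps: "is_path VH EH ps" "hd ps = \<phi> b" "last ps = h" "set ps \<inter> ?F = {}"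
    using infinitely_connected_path[OF connected_H] by blast
  then obtain ys where ys: "ps = \<phi> b # ys" by (cases ps) (auto simp: is_path_conv)
  moreover have "h \<noteq> \<phi> b" using b h(2) by blast
  ultimately have "h \<in> set ys" using ps(3) by (cases ys rule: rev_cases) auto
  with ps ys show ?thesis by (intro exI[of _ ys]) (auto simp: is_path_conv)
qed

lemma partial_embedding_forth:
  assumes \<phi>: "partial_embedding D \<phi>" and t: "t \<in> VT"
  shows "\<exists>D' \<phi>'. partial_embedding D' \<phi>' \<and> extends D' \<phi>' D \<phi> \<and> t \<in> D'"
proof (cases "\<exists>d\<in>D. joined VT ET d t")
  case False
  then have t_isolated: "\<forall>d\<in>D. \<not> joined VT ET d t" by blast
  obtain h where h: "h \<in> VH" "h \<notin> \<phi> ` D" using partial_embedding_fresh[OF \<phi>] .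
  show ?thesis
    using partial_embedding_insert_isolated[OF \<phi> t t_isolated h] extends_insert
    by (intro exI[of _ "insert t D"] exI[of _ "\<phi>(t := h)"]) simp
next
  case True
  then obtain d xs where xs: "d \<in> D" "is_path VT ET xs" "hd xs = d" "last xs = t"
    unfolding joined_def by blast
  show ?thesis
  proof (cases "t \<in> D")
    case True
    then show ?thesis using \<phi> by (intro exI[of _ D] exI[of _ \<phi>]) simp
  next
    case t_new: False
    have "hd xs \<in> set xs" using xs(2) by (simp add: is_path_conv)
    with xs(1,3) have "set xs \<inter> D \<noteq> {}" by blast
    then obtain ys b zs where split: "xs = ys @ b # zs" "b \<in> D" "set zs \<inter> D = {}"
      by (meson split_at_last_member)
    have bzs: "is_path VT ET (b # zs)"
      using is_path_appendD(2)[of VT ET ys "b # zs"] xs(2) split(1) by simp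
    have t_zs: "t \<in> set zs"
      using xs(4) split t_new by (cases zs rule: rev_cases) auto
    obtain ys' where "is_path VH EH (\<phi> b # ys')" "set ys' \<inter> \<phi> ` D = {}" "length ys' = length zs"
      using path_from_image[OF \<phi> split(2)] by blast
    then obtain \<phi>' where "partial_embedding (D \<union> set zs) \<phi>'" "extends (D \<union> set zs) \<phi>' D \<phi>"
      using partial_embedding_extend_path[OF \<phi> split(2) bzs split(3)] by blast
    with t_zs show ?thesis by blast
  qed
qed

lemma partial_embedding_back_isolated:
  assumes \<phi>: "partial_embedding D \<phi>" and h: "h \<in> VH" "h \<notin> \<phi> ` D"
    and c: "c \<in> VT" "\<forall>d\<in>D. \<not> joined VT ET d c"
  shows "\<exists>D' \<phi>'. partial_embedding D' \<phi>' \<and> extends D' \<phi>' D \<phi> \<and> h \<in> \<phi>' ` D'"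
  using partial_embedding_insert_isolated[OF \<phi> c h] extends_insert by fastforce

text \<open>For every \<open>b \<in> D\<close> there is a path from \<open>\<phi> b\<close> to \<open>h\<close> in \<open>H\<close> avoiding the rest of the image;
  a long enough path leaving \<open>D\<close> in the forest can be mapped onto an initial part of it.\<close>

lemma partial_embedding_back_long:
  assumes \<phi>: "partial_embedding D \<phi>" and h: "h \<in> VH" "h \<notin> \<phi> ` D"
    and long: "\<And>n. \<exists>b zs. b \<in> D \<and> is_path VT ET (b # zs) \<and> set zs \<inter> D = {} \<and> n \<le> length zs"
  shows "\<exists>D' \<phi>'. partial_embedding D' \<phi>' \<and> extends D' \<phi>' D \<phi> \<and> h \<in> \<phi>' ` D'"
proof -
  have "\<forall>b\<in>D. \<exists>ys. is_path VH EH (\<phi> b # ys) \<and> set ys \<inter> \<phi> ` D = {} \<and> h \<in> set ys"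
    using path_from_image_to[OF \<phi> _ h] by blast
  from bchoice[OF this] obtain path where path: "\<forall>b\<in>D. is_path VH EH (\<phi> b # path b)
      \<and> set (path b) \<inter> \<phi> ` D = {} \<and> h \<in> set (path b)" ..
  obtain b zs where b: "b \<in> D" and bzs: "is_path VT ET (b # zs)" "set zs \<inter> D = {}"
    and len: "(\<Sum>b\<in>D. length (path b)) \<le> length zs"
    using long[of "\<Sum>b\<in>D. length (path b)"] by blast
  let ?ys = "path b"
  let ?zs = "take (length ?ys) zs"
  have ys: "is_path VH EH (\<phi> b # ?ys)" "set ?ys \<inter> \<phi> ` D = {}" "h \<in> set ?ys"
    using path b by simp_all
  have "length ?ys \<le> (\<Sum>b\<in>D. length (path b))"
    using member_le_sum[of b D "\<lambda>b. length (path b)"] b \<phi> unfolding partial_embedding_def by simp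
  with len have len': "length ?ys = length ?zs" by simp
  have "is_path VT ET (b # ?zs)"
    using is_path_take[OF bzs(1), of "Suc (length ?ys)"] by simp
  moreover have "set ?zs \<inter> D = {}" using bzs(2) by (meson disjoint_iff in_set_takeD)
  ultimately obtain \<phi>' where \<phi>': "partial_embedding (D \<union> set ?zs) \<phi>'"
    "extends (D \<union> set ?zs) \<phi>' D \<phi>" "\<phi>' ` set ?zs = set ?ys"
    using partial_embedding_extend_path[OF \<phi> b _ _ ys(1,2) len'] by blast
  then have "h \<in> \<phi>' ` (D \<union> set ?zs)" using ys(3) by blast
  with \<phi>'(1,2) show ?thesis by blast
qed

lemma partial_embedding_back:
  assumes \<phi>: "partial_embedding D \<phi>" and h: "h \<in> VH"
    and T: "(\<exists>C\<in>components VT ET. unbounded_radius C (induced ET C)) \<or> infinite (components VT ET)"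
  shows "\<exists>D' \<phi>'. partial_embedding D' \<phi>' \<and> extends D' \<phi>' D \<phi> \<and> h \<in> \<phi>' ` D'"
proof (cases "h \<in> \<phi> ` D")
  case True
  then show ?thesis using \<phi> by (intro exI[of _ D] exI[of _ \<phi>]) simp
next
  case h_new: False
  have D: "finite D" "D \<subseteq> VT" "joins_inside VT ET D"
    using \<phi> unfolding partial_embedding_def by blast+
  show ?thesis
  proof (cases "\<exists>c\<in>VT. \<forall>d\<in>D. \<not> joined VT ET d c")
    case True
    then show ?thesis using partial_embedding_back_isolated[OF \<phi> h h_new] by blast
  next
    case all_joined: False
    then obtain C where C: "C \<in> components VT ET" "unbounded_radius C (induced ET C)"
      using T unjoined_vertex_if_infinite_components[OF graph_T D(1)] by blast
    then obtain c where c: "c \<in> VT" "C = component VT ET c" unfolding components_def by blast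
    with all_joined obtain u where u: "u \<in> D" "joined VT ET u c" by blast
    then have "u \<in> C"
      using c component_eq[OF graph_T u(2)] D(2) joined_refl[of u VT ET]
      unfolding component_def by blast
    then show ?thesis
      using partial_embedding_back_long[OF \<phi> h h_new]
        long_path_leaving[OF graph_T C D u(1)] by blast
  qed
qed

lemma has_spanning_copy:
  assumes "countable VT" "countable VH"
    and T: "(\<exists>C\<in>components VT ET. unbounded_radius C (induced ET C)) \<or> infinite (components VT ET)"
  shows "has_spanning_copy VH EH VT ET"
proof -
  have "\<exists>g. (\<forall>x\<in>VT. \<forall>y\<in>VT. \<exists>D \<phi>. partial_embedding D \<phi> \<and> x \<in> D \<and> y \<in> D
      \<and> g x = \<phi> x \<and> g y = \<phi> y) \<and> VH \<subseteq> g ` VT"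
  proof (rule back_and_forth[of partial_embedding VT VH "{}" undefined])
    show "D \<subseteq> VT" if "partial_embedding D \<phi>" for D \<phi>
      using that unfolding partial_embedding_def by blast
    show "\<exists>D' \<phi>'. partial_embedding D' \<phi>' \<and> extends D' \<phi>' D \<phi> \<and> t \<in> D'"
      if "partial_embedding D \<phi>" "t \<in> VT" for D \<phi> t
      using that by (rule partial_embedding_forth)
    show "\<exists>D' \<phi>'. partial_embedding D' \<phi>' \<and> extends D' \<phi>' D \<phi> \<and> h \<in> \<phi>' ` D'"
      if "partial_embedding D \<phi>" "h \<in> VH" for D \<phi> h
      using that T by (rule partial_embedding_back)
  qed (use assms(1,2) partial_embedding_empty in blast)+
  then obtain g where common: "\<And>x y. x \<in> VT \<Longrightarrow> y \<in> VT \<Longrightarrow>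
      \<exists>D \<phi>. partial_embedding D \<phi> \<and> x \<in> D \<and> y \<in> D \<and> g x = \<phi> x \<and> g y = \<phi> y"
    and onto: "VH \<subseteq> g ` VT"
    by blast
  have "inj_on g VT"
  proof (rule inj_onI)
    fix x y assume "x \<in> VT" "y \<in> VT" "g x = g y"
    with common[of x y] show "x = y" unfolding partial_embedding_def inj_on_def by metis
  qed
  moreover have "g ` VT \<subseteq> VH"
    using common unfolding partial_embedding_def by blast
  moreover have "EH (g x) (g y)" if "x \<in> VT" "y \<in> VT" "ET x y" for x y
    using common[OF that(1,2)] that(3) unfolding partial_embedding_def by metis
  ultimately show ?thesis
    using onto unfolding has_spanning_copy_def bij_betw_def by blast
qed

end

theorem mainTheorem12:
  fixes VT :: "'a set" and ET :: "'a \<Rightarrow> 'a \<Rightarrow> bool"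
  assumes "graph VT ET" and "countable VT" and "infinite VT"
  shows "(\<forall>(VH :: nat set) EH. graph VH EH \<and> infinite VH \<and> infinitely_connected VH EH
            \<longrightarrow> has_spanning_copy VH EH VT ET)
     \<longleftrightarrow> forest VT ET \<and>
         ((\<exists>C\<in>components VT ET. unbounded_radius C (induced ET C))
          \<or> infinite (components VT ET))"
    (is "?embeds \<longleftrightarrow> _ \<and> ?spread")
proof
  assume ?embeds
  then have "has_spanning_copy UNIV (block_graph s) VT ET" if "0 < s" for s
    using graph_block_graph infinitely_connected_block_graph[OF that] by simp
  then show "forest VT ET \<and> ?spread"
    using forest_if_block_graph_copies unbounded_or_infinite_if_block_graph_copies by blast
next
  assume "forest VT ET \<and> ?spread"
  then show ?embeds
    using forest_into_infinitely_connected.has_spanning_copy[of VT ET] assms(1,2)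
    unfolding forest_into_infinitely_connected_def by blast
qed

end
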